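(* Let $\lambda_1 \in \mathbb{R}\setminus\{0\}$ and let all constants $\mu_i$ ($i=1,\dots,7$) be arbitrary real numbers. For real functions $F,K,R$ of one variable, consider the nonlinear differential operator acting on smooth functions $w=w(z)$, $$\mathbf{F}_T[w]=\frac{d}{dz}\Big(F(w)\frac{dw}{dz}\Big)+K(w)\frac{dw}{dz}+R(w).$$ A finite-dimensional linear space $\mathbf{V}$ of functions of $z$ is called invariant under $\mathbf{F}_T$ if $\mathbf{F}_T[w]\in\mathbf{V}$ for every $w\in\mathbf{V}$. Then in each of the following five cases the two-dimensional space $\mathbf{V}_2$ (which is the solution space of a second-order linear ODE $y''+p_1(z)y'+p_0(z)y=0$ with $p_1(z)p_0(z)=0$) is invariant under $\mathbf{F}_T$: 1. $F(w)=\lambda_1^2\big(\tfrac12\mu_5w^2+\mu_6w+\mu_7\big)$, $K(w)=\lambda_1(\mu_3w+\mu_4)$, $R(w)=\mu_1w+\mu_2$, and $\mathbf{V}_2=\mathrm{Span}\{1,z\}$. 2. For $\rho_1\neq0$: $F(w)=\lambda_1^2\Big(-\frac{1}{12}\cdot\frac{-6\mu_5\rho_1\lambda_1w-\mu_1w^2+3\mu_2w}{\rho_1^2\lambda_1^2}+\mu_7\Big)$, $K(w)=\lambda_1\Big(\frac{5}{12}\frac{\mu_1w^2}{\rho_1\lambda_1}+\mu_5w+\mu_6\Big)$, $R(w)=\frac16\mu_1w^3+\frac12\mu_2w^2+\mu_3w+\mu_4$, and $\mathbf{V}_2=\mathrm{Span}\{1,e^{-\rho_1z}\}$. 3. For $\rho_0>0$: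 $F(w)=\lambda_1^2\Big(\frac{\mu_1w^2}{3\lambda_1^2\rho_0}+\mu_4\Big)$, $K(w)=\lambda_1\mu_3$, $R(w)=\mu_1w^3+\mu_2w$, and $\mathbf{V}_2=\mathrm{Span}\{\sin(\sqrt{\rho_0}z),\cos(\sqrt{\rho_0}z)\}$. 4. $F(w)=\lambda_1^2(\mu_4w+\mu_5)$, $K(w)=0$, $R(w)=\mu_2w+\mu_3$, and $\mathbf{V}_2=\mathrm{Span}\{1,(z-\mu_1)^2\}$. 5. For $\mu_1\neq0$: $F(w)=\lambda_1^2\Big(\frac{\mu_1^2\mu_3}{4\lambda_1^2}w+\mu_6\Big)$, $K(w)=0$, $R(w)=\frac12\mu_3w^2+\mu_4w+\mu_5$, and $\mathbf{V}_2=\mathrm{Span}\{1,\sin\big(\tfrac{z+\mu_2}{\mu_1}\big)\}$.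
   Context: This operator arises from the $(3+1)$-dimensional time-fractional convection-diffusion-reaction equation $\partial_t^\alpha u=\sum_{r=1}^3\partial_{x_r}(F_r(u)\partial_{x_r}u)+\sum_{r=1}^3K_r(u)\partial_{x_r}u+R(u)$ via the substitution $u(x_1,x_2,x_3,t)=w(z,t)$, $z=\lambda_1x_1+\lambda_2x_2+\lambda_3x_3$, with $F(w)=\sum_{r=1}^3\lambda_r^2F_r(w)$ and $K(w)=\sum_{r=1}^3\lambda_rK_r(w)$; the claim concerns only the resulting ordinary differential operator in $z$. *)

theory Defs
  imports "HOL-Analysis.Analysis"
begin

definition FT :: "(real \<Rightarrow> real) \<Rightarrow> (real \<Rightarrow> real) \<Rightarrow> (real \<Rightarrow> real) \<Rightarrow> (real \<Rightarrow> real) \<Rightarrow> (real \<Rightarrow> real)" where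
  "FT F K R w = (\<lambda>z. deriv (\<lambda>s. F (w s) * deriv w s) z + K (w z) * deriv w z + R (w z))"

definition span2 :: "(real \<Rightarrow> real) \<Rightarrow> (real \<Rightarrow> real) \<Rightarrow> (real \<Rightarrow> real) set" where
  "span2 f g = {(\<lambda>z. a * f z + b * g z) | a b. True}"

definition invariant_under :: "(real \<Rightarrow> real) set \<Rightarrow> ((real \<Rightarrow> real) \<Rightarrow> (real \<Rightarrow> real)) \<Rightarrow> bool" where
  "invariant_under V Op \<longleftrightarrow> (\<forall>w\<in>V. Op w \<in> V)"

end

theory Submission
  imports Defs
begin

text \<open>For \<open>w\<close> in each space, \<open>w'\<close> and \<open>w''\<close> are again polynomials in the basis functions
  (modulo \<open>sin\<^sup>2 + cos\<^sup>2 = 1\<close>), so when \<open>F\<close>, \<open>K\<close>, \<open>R\<close> are polynomials, so is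
  \<open>F\<^sub>T[w] = F'(w) w'\<^sup>2 + F(w) w'' + K(w) w' + R(w)\<close>. The relations between the coefficients
  of \<open>F\<close>, \<open>K\<close>, \<open>R\<close> in each case are exactly what makes its higher-degree terms cancel.\<close>

lemma FT_expand:
  assumes F': "\<And>u. (F has_real_derivative F' u) (at u)"
    and w': "\<And>z. (w has_real_derivative w' z) (at z)"
    and w'': "\<And>z. (w' has_real_derivative w'' z) (at z)"
  shows "FT F K R w z = F' (w z) * (w' z)^2 + F (w z) * w'' z + K (w z) * w' z + R (w z)"
proof -
  have "deriv w = w'"
    using w' by (intro ext DERIV_imp_deriv)
  moreover have "((\<lambda>s. F (w s) * w' s) has_real_derivative F' (w z) * (w' z)^2 + F (w z) * w'' z) (at z)"
    by (auto intro!: derivative_eq_intros DERIV_chain2[OF F'] w' w'' simp: power2_eq_square)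
  ultimately show ?thesis
    unfolding FT_def by (simp add: DERIV_imp_deriv)
qed

lemma invariant_under_span2I:
  assumes "\<And>a b. \<exists>c d. \<forall>z. Op (\<lambda>z. a * f z + b * g z) z = c * f z + d * g z"
  shows "invariant_under (span2 f g) Op"
  unfolding invariant_under_def span2_def
proof (intro ballI)
  fix w assume "w \<in> {\<lambda>z. a * f z + b * g z |a b. True}"
  then obtain a b where w: "w = (\<lambda>z. a * f z + b * g z)" by blast
  obtain c d where "\<forall>z. Op w z = c * f z + d * g z"
    using assms unfolding w by blast
  then show "Op w \<in> {\<lambda>z. a * f z + b * g z |a b. True}" by blast
qed

lemma invariant_under_span_const_id:
  assumes F: "F = (\<lambda>w. f\<^sub>2 * w^2 + f\<^sub>1 * w + f\<^sub>0)"
    and K: "K = (\<lambda>w. k\<^sub>1 * w + k\<^sub>0)"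
    and R: "R = (\<lambda>w. g\<^sub>1 * w + g\<^sub>0)"
  shows "invariant_under (span2 (\<lambda>z. 1) (\<lambda>z. z)) (FT F K R)"
proof (rule invariant_under_span2I)
  fix a b :: real
  show "\<exists>c d. \<forall>z. FT F K R (\<lambda>z. a * 1 + b * z) z = c * 1 + d * z"
  proof (intro exI allI)
    fix z :: real
    define w where "w = (\<lambda>z::real. a * 1 + b * z)"
    have "FT F K R w z = (2 * f\<^sub>2 * w z + f\<^sub>1) * b^2 + F (w z) * 0 + K (w z) * b + R (w z)"
      by (rule FT_expand[where F' = "\<lambda>w. 2 * f\<^sub>2 * w + f\<^sub>1" and w' = "\<lambda>z. b" and w'' = "\<lambda>z. 0"])
        (auto intro!: derivative_eq_intros simp: F w_def power2_eq_square)
    also have "\<dots> = ((2 * f\<^sub>2 * a + f\<^sub>1) * b^2 + (k\<^sub>1 * a + k\<^sub>0) * b + g\<^sub>1 * a + g\<^sub>0) * 1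
                    + (2 * f\<^sub>2 * b^3 + k\<^sub>1 * b^2 + g\<^sub>1 * b) * z"
      unfolding K R w_def by (simp add: algebra_simps power2_eq_square power3_eq_cube)
    finally show "FT F K R (\<lambda>z. a * 1 + b * z) z = \<dots>"
      unfolding w_def .
  qed
qed

lemma invariant_under_span_const_exp:
  fixes \<rho> :: real
  assumes F: "F = (\<lambda>w. f\<^sub>2 * w^2 + f\<^sub>1 * w + f\<^sub>0)"
    and K: "K = (\<lambda>w. k\<^sub>2 * w^2 + k\<^sub>1 * w + k\<^sub>0)"
    and R: "R = (\<lambda>w. g\<^sub>3 * w^3 + g\<^sub>2 * w^2 + g\<^sub>1 * w + g\<^sub>0)"
    and cubic: "3 * \<rho>^2 * f\<^sub>2 - \<rho> * k\<^sub>2 + g\<^sub>3 = 0"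
    and quadratic: "4 * \<rho>^2 * f\<^sub>2 - 2 * \<rho> * k\<^sub>2 + 3 * g\<^sub>3 = 0" "2 * \<rho>^2 * f\<^sub>1 - \<rho> * k\<^sub>1 + g\<^sub>2 = 0"
  shows "invariant_under (span2 (\<lambda>z. 1) (\<lambda>z. exp (- \<rho> * z))) (FT F K R)"
proof (rule invariant_under_span2I)
  fix a b :: real
  show "\<exists>c d. \<forall>z. FT F K R (\<lambda>z. a * 1 + b * exp (- \<rho> * z)) z = c * 1 + d * exp (- \<rho> * z)"
  proof (intro exI allI)
    fix z :: real
    define u where "u = (\<lambda>z. b * exp (- \<rho> * z))"
    define w where "w = (\<lambda>z. a * 1 + u z)"
    have "FT F K R w z
        = (2 * f\<^sub>2 * w z + f\<^sub>1) * (- \<rho> * u z)^2 + F (w z) * (\<rho>^2 * u z)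
          + K (w z) * (- \<rho> * u z) + R (w z)"
      by (rule FT_expand[where F' = "\<lambda>w. 2 * f\<^sub>2 * w + f\<^sub>1" and w' = "\<lambda>z. - \<rho> * u z"
                                and w'' = "\<lambda>z. \<rho>^2 * u z"])
        (auto intro!: derivative_eq_intros simp: F u_def w_def power2_eq_square)
    also have "\<dots> = R a + (\<rho>^2 * F a - \<rho> * K a + 3 * g\<^sub>3 * a^2 + 2 * g\<^sub>2 * a + g\<^sub>1) * u z
          + (u z)^3 * (3 * \<rho>^2 * f\<^sub>2 - \<rho> * k\<^sub>2 + g\<^sub>3)
          + (u z)^2 * (a * (4 * \<rho>^2 * f\<^sub>2 - 2 * \<rho> * k\<^sub>2 + 3 * g\<^sub>3) + (2 * \<rho>^2 * f\<^sub>1 - \<rho> * k\<^sub>1 + g\<^sub>2))"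
      unfolding F K R w_def by (simp add: algebra_simps power2_eq_square power3_eq_cube)
    also have "\<dots> = R a * 1 + ((\<rho>^2 * F a - \<rho> * K a + 3 * g\<^sub>3 * a^2 + 2 * g\<^sub>2 * a + g\<^sub>1) * b) * exp (- \<rho> * z)"
      unfolding cubic quadratic u_def by simp
    finally show "FT F K R (\<lambda>z. a * 1 + b * exp (- \<rho> * z)) z = \<dots>"
      unfolding u_def w_def .
  qed
qed

lemma invariant_under_span_sin_cos:
  fixes \<omega> :: real
  assumes F: "F = (\<lambda>w. f\<^sub>2 * w^2 + f\<^sub>0)"
    and R: "R = (\<lambda>w. g\<^sub>3 * w^3 + g\<^sub>1 * w)"
    and cubic: "g\<^sub>3 = 3 * \<omega>^2 * f\<^sub>2"
  shows "invariant_under (span2 (\<lambda>z. sin (\<omega> * z)) (\<lambda>z. cos (\<omega> * z))) (FT F (\<lambda>w. \<kappa>) R)"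
proof (rule invariant_under_span2I)
  fix a b :: real
  define A where "A = 2 * \<omega>^2 * f\<^sub>2 * (a^2 + b^2) - \<omega>^2 * f\<^sub>0 + g\<^sub>1"
  show "\<exists>c d. \<forall>z. FT F (\<lambda>w. \<kappa>) R (\<lambda>z. a * sin (\<omega> * z) + b * cos (\<omega> * z)) z
                   = c * sin (\<omega> * z) + d * cos (\<omega> * z)"
  proof (intro exI allI)
    fix z :: real
    define w where "w = (\<lambda>z. a * sin (\<omega> * z) + b * cos (\<omega> * z))"
    define v where "v = (\<lambda>z. a * cos (\<omega> * z) - b * sin (\<omega> * z))"
    have pythagoras: "(v z)^2 = a^2 + b^2 - (w z)^2"
      using sin_cos_squared_add[of "\<omega> * z"] unfolding v_def w_def by algebra
    have "FT F (\<lambda>w. \<kappa>) R w z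
        = 2 * f\<^sub>2 * w z * (\<omega> * v z)^2 + F (w z) * (- (\<omega>^2 * w z)) + \<kappa> * (\<omega> * v z) + R (w z)"
      by (rule FT_expand[where F' = "\<lambda>w. 2 * f\<^sub>2 * w" and w' = "\<lambda>z. \<omega> * v z"
                                and w'' = "\<lambda>z. - (\<omega>^2 * w z)"])
        (auto intro!: derivative_eq_intros simp: F v_def w_def power2_eq_square algebra_simps)
    also have "\<dots> = A * w z + \<kappa> * \<omega> * v z"
      unfolding F R A_def cubic power_mult_distrib pythagoras
      by (simp add: algebra_simps power2_eq_square power3_eq_cube)
    also have "\<dots> = (A * a - \<kappa> * \<omega> * b) * sin (\<omega> * z) + (A * b + \<kappa> * \<omega> * a) * cos (\<omega> * z)"
      unfolding v_def w_def by (simp add: algebra_simps)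
    finally show "FT F (\<lambda>w. \<kappa>) R (\<lambda>z. a * sin (\<omega> * z) + b * cos (\<omega> * z)) z = \<dots>"
      unfolding w_def .
  qed
qed

lemma invariant_under_span_const_square:
  fixes c :: real
  assumes F: "F = (\<lambda>w. f\<^sub>1 * w + f\<^sub>0)"
    and R: "R = (\<lambda>w. g\<^sub>1 * w + g\<^sub>0)"
  shows "invariant_under (span2 (\<lambda>z. 1) (\<lambda>z. (z - c)^2)) (FT F (\<lambda>w. 0) R)"
proof (rule invariant_under_span2I)
  fix a b :: real
  show "\<exists>d e. \<forall>z. FT F (\<lambda>w. 0) R (\<lambda>z. a * 1 + b * (z - c)^2) z = d * 1 + e * (z - c)^2"
  proof (intro exI allI)
    fix z :: real
    define w where "w = (\<lambda>z. a * 1 + b * (z - c)^2)"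
    have "FT F (\<lambda>w. 0) R w z = f\<^sub>1 * (2 * b * (z - c))^2 + F (w z) * (2 * b) + 0 * (2 * b * (z - c)) + R (w z)"
      by (rule FT_expand[where F' = "\<lambda>w. f\<^sub>1" and w' = "\<lambda>z. 2 * b * (z - c)" and w'' = "\<lambda>z. 2 * b"])
        (auto intro!: derivative_eq_intros simp: F w_def)
    also have "\<dots> = (2 * b * (f\<^sub>1 * a + f\<^sub>0) + g\<^sub>1 * a + g\<^sub>0) * 1 + (6 * f\<^sub>1 * b^2 + g\<^sub>1 * b) * (z - c)^2"
      unfolding F R w_def by (simp add: algebra_simps power2_eq_square)
    finally show "FT F (\<lambda>w. 0) R (\<lambda>z. a * 1 + b * (z - c)^2) z = \<dots>"
      unfolding w_def .
  qed
qed

lemma invariant_under_span_const_sin: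
  fixes \<omega> \<phi> :: real
  assumes F: "F = (\<lambda>w. f\<^sub>1 * w + f\<^sub>0)"
    and R: "R = (\<lambda>w. g\<^sub>2 * w^2 + g\<^sub>1 * w + g\<^sub>0)"
    and quadratic: "g\<^sub>2 = 2 * \<omega>^2 * f\<^sub>1"
  shows "invariant_under (span2 (\<lambda>z. 1) (\<lambda>z. sin (\<omega> * z + \<phi>))) (FT F (\<lambda>w. 0) R)"
proof (rule invariant_under_span2I)
  fix a b :: real
  show "\<exists>c d. \<forall>z. FT F (\<lambda>w. 0) R (\<lambda>z. a * 1 + b * sin (\<omega> * z + \<phi>)) z = c * 1 + d * sin (\<omega> * z + \<phi>)"
  proof (intro exI allI)
    fix z :: real
    define s where "s = (\<lambda>z. sin (\<omega> * z + \<phi>))"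
    define w where "w = (\<lambda>z. a * 1 + b * s z)"
    have pythagoras: "(cos (\<omega> * z + \<phi>))^2 = 1 - (s z)^2"
      unfolding s_def by (simp add: cos_squared_eq)
    have "FT F (\<lambda>w. 0) R w z
        = f\<^sub>1 * (b * \<omega> * cos (\<omega> * z + \<phi>))^2 + F (w z) * (- b * \<omega>^2 * s z)
          + 0 * (b * \<omega> * cos (\<omega> * z + \<phi>)) + R (w z)"
      by (rule FT_expand[where F' = "\<lambda>w. f\<^sub>1" and w' = "\<lambda>z. b * \<omega> * cos (\<omega> * z + \<phi>)"
                                and w'' = "\<lambda>z. - b * \<omega>^2 * s z"])
        (auto intro!: derivative_eq_intros simp: F s_def w_def power2_eq_square)
    also have "\<dots> = (f\<^sub>1 * b^2 * \<omega>^2 + g\<^sub>2 * a^2 + g\<^sub>1 * a + g\<^sub>0) * 1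
                    + (2 * g\<^sub>2 * a * b + g\<^sub>1 * b - (f\<^sub>1 * a + f\<^sub>0) * b * \<omega>^2) * s z"
      unfolding F R quadratic w_def power_mult_distrib pythagoras
      by (simp add: algebra_simps power2_eq_square)
    finally show "FT F (\<lambda>w. 0) R (\<lambda>z. a * 1 + b * sin (\<omega> * z + \<phi>)) z = \<dots>"
      unfolding s_def w_def .
  qed
qed

theorem theorem3:
  fixes l1 m1 m2 m3 m4 m5 m6 m7 r0 r1 :: real
  assumes "l1 \<noteq> 0"
  shows
   "invariant_under (span2 (\<lambda>z. 1) (\<lambda>z. z))
      (FT (\<lambda>w. l1^2 * (1/2 * m5 * w^2 + m6 * w + m7))
          (\<lambda>w. l1 * (m3 * w + m4))
          (\<lambda>w. m1 * w + m2))
    \<and> (r1 \<noteq> 0 \<longrightarrow> invariant_under (span2 (\<lambda>z. 1) (\<lambda>z. exp (- r1 * z)))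
      (FT (\<lambda>w. l1^2 * (- (1/12) * ((- 6 * m5 * r1 * l1 * w - m1 * w^2 + 3 * m2 * w)
                                         / (r1^2 * l1^2)) + m7))
          (\<lambda>w. l1 * (5/12 * (m1 * w^2) / (r1 * l1) + m5 * w + m6))
          (\<lambda>w. 1/6 * m1 * w^3 + 1/2 * m2 * w^2 + m3 * w + m4)))
    \<and> (r0 > 0 \<longrightarrow> invariant_under (span2 (\<lambda>z. sin (sqrt r0 * z)) (\<lambda>z. cos (sqrt r0 * z)))
      (FT (\<lambda>w. l1^2 * (m1 * w^2 / (3 * l1^2 * r0) + m4))
          (\<lambda>w. l1 * m3)
          (\<lambda>w. m1 * w^3 + m2 * w)))
    \<and> invariant_under (span2 (\<lambda>z. 1) (\<lambda>z. (z - m1)^2))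
      (FT (\<lambda>w. l1^2 * (m4 * w + m5))
          (\<lambda>w. 0)
          (\<lambda>w. m2 * w + m3))
    \<and> (m1 \<noteq> 0 \<longrightarrow> invariant_under (span2 (\<lambda>z. 1) (\<lambda>z. sin ((z + m2) / m1)))
      (FT (\<lambda>w. l1^2 * (m1^2 * m3 / (4 * l1^2) * w + m6))
          (\<lambda>w. 0)
          (\<lambda>w. 1/2 * m3 * w^2 + m4 * w + m5)))"
proof -
  have shifted_sin: "(\<lambda>z. sin ((z + m2) / m1)) = (\<lambda>z. sin (1 / m1 * z + m2 / m1))"
    by (simp add: add_divide_distrib)
  show ?thesis
    unfolding shifted_sin
    apply (intro conjI impI)
    subgoal
      by (rule invariant_under_span_const_id[where f\<^sub>2 = "l1^2 * m5 / 2" and f\<^sub>1 = "l1^2 * m6"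
            and f\<^sub>0 = "l1^2 * m7" and k\<^sub>1 = "l1 * m3" and k\<^sub>0 = "l1 * m4" and g\<^sub>1 = m1 and g\<^sub>0 = m2])
        (simp_all add: fun_eq_iff algebra_simps)
    subgoal
      by (rule invariant_under_span_const_exp[where f\<^sub>2 = "m1 / (12 * r1^2)"
            and f\<^sub>1 = "(2 * m5 * r1 * l1 - m2) / (4 * r1^2)" and f\<^sub>0 = "l1^2 * m7"
            and k\<^sub>2 = "5 * m1 / (12 * r1)" and k\<^sub>1 = "l1 * m5" and k\<^sub>0 = "l1 * m6"
            and g\<^sub>3 = "m1 / 6" and g\<^sub>2 = "m2 / 2" and g\<^sub>1 = m3 and g\<^sub>0 = m4])
        (use assms in \<open>simp_all add: fun_eq_iff field_simps power2_eq_square\<close>)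
    subgoal
      by (rule invariant_under_span_sin_cos[where f\<^sub>2 = "m1 / (3 * r0)" and f\<^sub>0 = "l1^2 * m4"
            and g\<^sub>3 = m1 and g\<^sub>1 = m2])
        (use assms in \<open>simp_all add: fun_eq_iff field_simps power2_eq_square\<close>)
    subgoal
      by (rule invariant_under_span_const_square[where f\<^sub>1 = "l1^2 * m4" and f\<^sub>0 = "l1^2 * m5"
            and g\<^sub>1 = m2 and g\<^sub>0 = m3])
        (simp_all add: fun_eq_iff algebra_simps)
    subgoal
      by (rule invariant_under_span_const_sin[where f\<^sub>1 = "m1^2 * m3 / 4" and f\<^sub>0 = "l1^2 * m6"
            and g\<^sub>2 = "m3 / 2" and g\<^sub>1 = m4 and g\<^sub>0 = m5])
        (use assms in \<open>simp_all add: fun_eq_iff field_simps power2_eq_square\<close>)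
    done
qed

end
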